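(* Let $B\in\mathscr{S}_d(\mathcal{H},\mathcal{J})$. There exist unique orthogonal decompositions $\mathcal{H}=\mathcal{H}_0\oplus\mathcal{H}'$ and $\mathcal{J}=\mathcal{J}_0\oplus\mathcal{J}'$ such that for every $n$ and $Z\in\mathbb{B}^d_n$, $B(Z)$ maps $\mathcal{H}_0\otimes\mathbb{C}^n$ into $\mathcal{J}_0\otimes\mathbb{C}^n$ and $\mathcal{H}'\otimes\mathbb{C}^n$ into $\mathcal{J}'\otimes\mathbb{C}^n$; the restrictions $B_0(Z):=B(Z)|_{\mathcal{H}_0\otimes\mathbb{C}^n}$ define a purely contractive $B_0\in\mathscr{S}_d(\mathcal{H}_0,\mathcal{J}_0)$; and $B(Z)|_{\mathcal{H}'\otimes\mathbb{C}^n}=B(0_n)|_{\mathcal{H}'\otimes\mathbb{C}^n}$ is a surjective isometry of $\mathcal{H}'\otimes\mathbb{C}^n$ onto $\mathcal{J}'\otimes\mathbb{C}^n$ (a unitary constant).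
   Context: $\mathbb{B}^d_n$: $d$-tuples $Z=(Z_1,\dots,Z_d)$ of complex $n\times n$ matrices with $\|[Z_1\cdots Z_d]\|<1$ as an operator $\mathbb{C}^n\otimes\mathbb{C}^d\to\mathbb{C}^n$; $0_n=(0,\dots,0)\in\mathbb{B}^d_n$. $\mathscr{S}_d(\mathcal{H},\mathcal{J})$: functions $B(Z)=\sum_{\omega}\hat B_\omega\otimes Z^\omega\in\mathscr{B}(\mathcal{H}\otimes\mathbb{C}^n,\mathcal{J}\otimes\mathbb{C}^n)$ ($\omega$ ranging over words in $\{1,\dots,d\}$, $Z^{i_1\cdots i_k}=Z_{i_1}\cdots Z_{i_k}$, $\hat B_\omega\in\mathscr{B}(\mathcal{H},\mathcal{J})$) with $\sup_Z\|B(Z)\|\le1$. $B$ is purely contractive if $\|B(Z)h\|<\|h\|$ for all $Z$ and all $h\ne0$. *)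

theory Defs
  imports "HOL-Analysis.Analysis"
begin

text \<open>A complex Hilbert space is
  modelled as a real Hilbert space (real inner product, complete) with a complex
  scalar multiplication compatible with the real one and with the norm.  By the
  Jordan-von Neumann theorem the norm then comes from the complex inner product
  cinner below (recovered by polarization).\<close>

class chilbert = real_inner + complete_space +
  fixes cscale :: "complex \<Rightarrow> 'a \<Rightarrow> 'a" (infixr \<open>*\<^sub>C\<close> 75)
  assumes cscale_add_right: "a *\<^sub>C (x + y) = a *\<^sub>C x + a *\<^sub>C y"
    and cscale_add_left: "(a + b) *\<^sub>C x = a *\<^sub>C x + b *\<^sub>C x"
    and cscale_cscale: "a *\<^sub>C (b *\<^sub>C x) = (a * b) *\<^sub>C x"
    and cscale_of_real: "complex_of_real r *\<^sub>C x = r *\<^sub>R x"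
    and norm_cscale: "norm (a *\<^sub>C x) = cmod a * norm x"

instantiation complex :: chilbert
begin
definition cscale_complex :: "complex \<Rightarrow> complex \<Rightarrow> complex" where
  "cscale_complex a x = a * x"
instance
  by standard (auto simp: cscale_complex_def algebra_simps norm_mult scaleR_conv_of_real)
end

text \<open>Complex inner product (conjugate linear in the first argument).\<close>
definition cinner :: "'a::chilbert \<Rightarrow> 'a \<Rightarrow> complex" where
  "cinner x y = Complex (inner x y) (inner (\<i> *\<^sub>C x) y)"

definition csubspace :: "'a::chilbert set \<Rightarrow> bool" where
  "csubspace S \<longleftrightarrow> 0 \<in> S \<and> (\<forall>x\<in>S. \<forall>y\<in>S. x + y \<in> S) \<and> (\<forall>a. \<forall>x\<in>S. a *\<^sub>C x \<in> S)"

definition ortho :: "'a::chilbert set \<Rightarrow> 'a set" where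
  "ortho S = {y. \<forall>x\<in>S. cinner x y = 0}"

text \<open>A d-tuple Z = (Z_1,...,Z_d) of n x n complex matrices is a function
  Z k i j (k in {1..d}, i,j < n); other entries are irrelevant.\<close>

definition rownorm :: "nat \<Rightarrow> nat \<Rightarrow> (nat \<Rightarrow> nat \<Rightarrow> nat \<Rightarrow> complex) \<Rightarrow> real" where
  "rownorm d n Z = Sup {sqrt (\<Sum>i<n. (cmod (\<Sum>k\<in>{1..d}. \<Sum>j<n. Z k i j * v k j))\<^sup>2) | v.
      (\<Sum>k\<in>{1..d}. \<Sum>j<n. (cmod (v k j))\<^sup>2) \<le> 1}"

definition rowball :: "nat \<Rightarrow> nat \<Rightarrow> (nat \<Rightarrow> nat \<Rightarrow> nat \<Rightarrow> complex) set" where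
  "rowball d n = {Z. rownorm d n Z < 1}"

definition matmul :: "nat \<Rightarrow> (nat \<Rightarrow> nat \<Rightarrow> complex) \<Rightarrow> (nat \<Rightarrow> nat \<Rightarrow> complex) \<Rightarrow> nat \<Rightarrow> nat \<Rightarrow> complex" where
  "matmul n A B = (\<lambda>i j. \<Sum>l<n. A i l * B l j)"

fun Zpow :: "nat \<Rightarrow> (nat \<Rightarrow> nat \<Rightarrow> nat \<Rightarrow> complex) \<Rightarrow> nat list \<Rightarrow> nat \<Rightarrow> nat \<Rightarrow> complex" where
  "Zpow n Z [] = (\<lambda>i j. if i = j then 1 else 0)"
| "Zpow n Z (k # w) = matmul n (Z k) (Zpow n Z w)"

definition words :: "nat \<Rightarrow> nat \<Rightarrow> nat list set" where
  "words d k = {w. length w = k \<and> set w \<subseteq> {1..d}}"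

text \<open>An element of H \<otimes> C^n is identified with x :: nat \<Rightarrow> H, x = \<Sum>_{i<n} x i \<otimes> e_i,
  with x i = 0 for i \<ge> n.\<close>
definition vecs :: "nat \<Rightarrow> 'a set \<Rightarrow> (nat \<Rightarrow> 'a::zero) set" where
  "vecs n S = {x. (\<forall>i<n. x i \<in> S) \<and> (\<forall>i\<ge>n. x i = 0)}"

definition vnorm :: "nat \<Rightarrow> (nat \<Rightarrow> 'a::real_normed_vector) \<Rightarrow> real" where
  "vnorm n x = sqrt (\<Sum>i<n. (norm (x i))\<^sup>2)"

text \<open>Degree-k homogeneous part of B(Z) applied to x: component i of
  \<Sum>_{|w|=k} (Bhat w \<otimes> Z^w) x, where ((T \<otimes> M) x)_i = \<Sum>_j M_ij T(x_j).\<close>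
definition hterm :: "nat \<Rightarrow> nat \<Rightarrow> (nat list \<Rightarrow> 'h::chilbert \<Rightarrow> 'j::chilbert)
    \<Rightarrow> (nat \<Rightarrow> nat \<Rightarrow> nat \<Rightarrow> complex) \<Rightarrow> (nat \<Rightarrow> 'h) \<Rightarrow> nat \<Rightarrow> nat \<Rightarrow> 'j" where
  "hterm d n Bh Z x k i = (\<Sum>w\<in>words d k. \<Sum>j<n. Zpow n Z w i j *\<^sub>C Bh w (x j))"

definition Beval :: "nat \<Rightarrow> nat \<Rightarrow> (nat list \<Rightarrow> 'h::chilbert \<Rightarrow> 'j::chilbert)
    \<Rightarrow> (nat \<Rightarrow> nat \<Rightarrow> nat \<Rightarrow> complex) \<Rightarrow> (nat \<Rightarrow> 'h) \<Rightarrow> nat \<Rightarrow> 'j" where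
  "Beval d n Bh Z x = (\<lambda>i. if i < n then (\<Sum>k. hterm d n Bh Z x k i) else 0)"

definition schur :: "nat \<Rightarrow> 'h::chilbert set \<Rightarrow> 'j::chilbert set \<Rightarrow> (nat list \<Rightarrow> 'h \<Rightarrow> 'j) \<Rightarrow> bool" where
  "schur d H J Bh \<longleftrightarrow>
     (\<forall>w. set w \<subseteq> {1..d} \<longrightarrow>
        Bh w ` H \<subseteq> J \<and>
        (\<forall>x\<in>H. \<forall>y\<in>H. Bh w (x + y) = Bh w x + Bh w y) \<and>
        (\<forall>a. \<forall>x\<in>H. Bh w (a *\<^sub>C x) = a *\<^sub>C Bh w x) \<and>
        (\<exists>C. \<forall>x\<in>H. norm (Bh w x) \<le> C * norm x)) \<and>
     (\<forall>n>0. \<forall>Z\<in>rowball d n. \<forall>x\<in>vecs n H.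
        (\<forall>i<n. summable (\<lambda>k. hterm d n Bh Z x k i)) \<and>
        vnorm n (Beval d n Bh Z x) \<le> vnorm n x)"

definition purely_contractive :: "nat \<Rightarrow> 'h::chilbert set \<Rightarrow> (nat list \<Rightarrow> 'h \<Rightarrow> 'j::chilbert) \<Rightarrow> bool" where
  "purely_contractive d H Bh \<longleftrightarrow>
     (\<forall>n>0. \<forall>Z\<in>rowball d n. \<forall>x\<in>vecs n H. x \<noteq> (\<lambda>_. 0) \<longrightarrow>
        vnorm n (Beval d n Bh Z x) < vnorm n x)"

end

(* Let A = B(0) be the constant coefficient Bh []; it is a contraction.  Its isometric set
   H' = {h. |A h| = |h|} is a closed subspace (parallelogram law), and so is J' = A H', since A
   is isometric on H'.  The decomposition is H0 = H'^perp, J0 = J'^perp.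

   Everything rests on a maximum principle.  Given Z in the row ball, the dilations t Z stay in
   the row ball for |t| < R, for some R > 1.  If |B(t0 Z) x| = |x| for one such t0, put
   u = B(t0 Z) x: the function t \<mapsto> <u, B(t Z) x> is a power series whose real part is at most
   |x|^2 and attains this value at t0.  By the open mapping theorem it is constant, and equality
   in the Cauchy-Schwarz inequality then gives B(t Z) x = u for all such t.  With t0 = 0 this says
   that B(Z) = B(0) on H' \<otimes> C^n; with t0 = 1 it says that B is purely contractive on H0 \<otimes> C^n.

   A contraction preserves orthogonality to the vectors it maps isometrically, so B(Z) maps
   H0 \<otimes> C^n into J0 \<otimes> C^n.  Evaluating B at small multiples of nilpotent shift matrices
   singles out each coefficient Bh w, which therefore maps H0 into J0.  Uniqueness follows by
   testing the required properties at n = 1 and Z = 0: the unitary part must be exactly the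
   isometric set of A. *)

theory Submission
  imports Defs "HOL-Complex_Analysis.Conformal_Mappings"
begin

lemma cscale_zero_left [simp]: "0 *\<^sub>C x = (0::'a::chilbert)"
  using cscale_of_real[of 0 x] by simp

lemma cscale_one [simp]: "1 *\<^sub>C x = (x::'a::chilbert)"
  using cscale_of_real[of 1 x] by simp

lemma cscale_zero_right [simp]: "a *\<^sub>C (0::'a::chilbert) = 0"
  using cscale_add_right[of a 0 0] by simp

lemma cscale_minus_one: "(- 1) *\<^sub>C x = - (x::'a::chilbert)"
  using cscale_of_real[of "- 1" x] by simp

lemma cscale_scaleR: "a *\<^sub>C (r *\<^sub>R x) = r *\<^sub>R (a *\<^sub>C (x::'a::chilbert))"
  by (metis cscale_cscale cscale_of_real mult.commute)

lemma cscale_sum_right: "a *\<^sub>C (\<Sum>i\<in>I. f i) = (\<Sum>i\<in>I. a *\<^sub>C (f i::'a::chilbert))"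
  by (induction I rule: infinite_finite_induct) (auto simp: cscale_add_right)

lemma cscale_eq_Re_Im: "a *\<^sub>C x = Re a *\<^sub>R x + Im a *\<^sub>R (\<i> *\<^sub>C (x::'a::chilbert))"
proof -
  have "(complex_of_real (Re a) + complex_of_real (Im a) * \<i>) *\<^sub>C x = Re a *\<^sub>R x + Im a *\<^sub>R (\<i> *\<^sub>C x)"
    by (simp add: cscale_add_left cscale_of_real flip: cscale_cscale)
  moreover have "complex_of_real (Re a) + complex_of_real (Im a) * \<i> = a"
    by (simp add: complex_eq_iff)
  ultimately show ?thesis
    by simp
qed

lemma inner_cscale_ii: "inner (\<i> *\<^sub>C x) (\<i> *\<^sub>C y) = inner x (y::'a::chilbert)"
proof -
  have "(norm (\<i> *\<^sub>C (x + y)))\<^sup>2 = (norm (x + y))\<^sup>2" and "(norm (\<i> *\<^sub>C x))\<^sup>2 = (norm x)\<^sup>2"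
    and "(norm (\<i> *\<^sub>C y))\<^sup>2 = (norm y)\<^sup>2"
    by (simp_all add: norm_cscale)
  then show ?thesis
    by (simp add: cscale_add_right power2_norm_eq_inner inner_add inner_commute)
qed

lemma inner_cscale_i_right: "inner x (\<i> *\<^sub>C y) = - inner (\<i> *\<^sub>C x) (y::'a::chilbert)"
proof -
  have "\<i> *\<^sub>C (\<i> *\<^sub>C y) = - y"
    by (simp add: cscale_cscale cscale_minus_one)
  then show ?thesis
    using inner_cscale_ii[of x "\<i> *\<^sub>C y"] by simp
qed

lemma Re_cinner [simp]: "Re (cinner x y) = inner x y"
  by (simp add: cinner_def)

lemma cinner_eq_0_iff: "cinner x y = 0 \<longleftrightarrow> inner x y = 0 \<and> inner (\<i> *\<^sub>C x) y = 0"
  by (simp add: cinner_def complex_eq_iff)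

lemma cinner_add_right: "cinner x (y + z) = cinner x y + cinner x (z::'a::chilbert)"
  by (simp add: cinner_def complex_eq_iff inner_add_right)

lemma cinner_zero_right [simp]: "cinner x (0::'a::chilbert) = 0"
  by (simp add: cinner_def complex_eq_iff)

lemma bounded_linear_cinner_right: "bounded_linear (cinner (x::'a::chilbert))"
proof (rule bounded_linear_intro[where K = "2 * norm x"])
  fix y :: 'a
  have "cmod (cinner x y) \<le> \<bar>inner x y\<bar> + \<bar>inner (\<i> *\<^sub>C x) y\<bar>"
    using cmod_le[of "cinner x y"] by (simp add: cinner_def)
  also have "\<dots> \<le> norm x * norm y + norm (\<i> *\<^sub>C x) * norm y"
    by (intro add_mono Cauchy_Schwarz_ineq2)
  finally show "cmod (cinner x y) \<le> norm y * (2 * norm x)"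
    by (simp add: norm_cscale algebra_simps)
  show "cinner x (r *\<^sub>R y) = r *\<^sub>R cinner x y" for r y
    by (simp add: cinner_def complex_eq_iff)
qed (rule cinner_add_right)

lemma cinner_cscale_right: "cinner x (a *\<^sub>C y) = a * cinner x (y::'a::chilbert)"
proof -
  interpret bounded_linear "cinner x" by (rule bounded_linear_cinner_right)
  have i: "cinner x (\<i> *\<^sub>C y) = \<i> * cinner x y"
    by (simp add: cinner_def complex_eq_iff inner_cscale_ii inner_cscale_i_right[of x y])
  have "cinner x (a *\<^sub>C y) = cinner x (Re a *\<^sub>R y + Im a *\<^sub>R (\<i> *\<^sub>C y))"
    by (rule arg_cong[OF cscale_eq_Re_Im])
  also have "\<dots> = (complex_of_real (Re a) + complex_of_real (Im a) * \<i>) * cinner x y"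
    by (simp add: add scale i scaleR_conv_of_real algebra_simps)
  also have "\<dots> = a * cinner x y"
    by (simp add: complex_eq_iff)
  finally show ?thesis .
qed

section \<open>Closed subspaces and orthogonal complements\<close>

lemma csubspace_0: "csubspace S \<Longrightarrow> 0 \<in> S"
  by (simp add: csubspace_def)

lemma csubspace_imp_subspace: "csubspace S \<Longrightarrow> subspace S"
  unfolding csubspace_def subspace_def by (auto simp flip: cscale_of_real)

lemma csubspace_cscale: "csubspace S \<Longrightarrow> x \<in> S \<Longrightarrow> a *\<^sub>C x \<in> S"
  unfolding csubspace_def by blast

lemma mem_ortho_iff: "csubspace S \<Longrightarrow> y \<in> ortho S \<longleftrightarrow> (\<forall>x\<in>S. inner x y = 0)"
  unfolding ortho_def cinner_eq_0_iff by (auto intro: csubspace_cscale)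

lemma csubspace_ortho: "csubspace (ortho S)"
  unfolding csubspace_def ortho_def
  by (simp add: cinner_add_right cinner_cscale_right)

lemma closed_ortho: "closed (ortho S)"
proof -
  have "ortho S = (\<Inter>x\<in>S. {y. cinner x y = 0})"
    by (auto simp: ortho_def)
  moreover have "closed {y. cinner x y = 0}" for x
    by (intro closed_Collect_eq continuous_on_const
        linear_continuous_on[OF bounded_linear_cinner_right])
  ultimately show ?thesis by auto
qed

lemma ortho_disjoint: "x \<in> S \<Longrightarrow> x \<in> ortho S \<Longrightarrow> x = 0"
  using Re_cinner[of x x] by (auto simp: ortho_def)

lemma parallelogram_law:
  "(norm (x - y))\<^sup>2 + (norm (x + y))\<^sup>2 = 2 * (norm x)\<^sup>2 + 2 * (norm (y::'a::real_inner))\<^sup>2"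
  by (simp add: power2_norm_eq_inner inner_add inner_diff inner_commute)

lemma Cauchy_if_dist_sq_le:
  fixes s :: "nat \<Rightarrow> 'a::metric_space"
  assumes a: "a \<longlonglongrightarrow> 0" and s: "\<And>m n. (dist (s m) (s n))\<^sup>2 \<le> 2 * a m + 2 * a n"
  shows "Cauchy s"
proof (rule metric_CauchyI)
  fix e :: real assume "e > 0"
  then obtain M where M: "\<And>n. n \<ge> M \<Longrightarrow> \<bar>a n\<bar> < e\<^sup>2 / 4"
    using LIMSEQ_D[OF a, of "e\<^sup>2 / 4"] by auto
  have "dist (s m) (s n) < e" if "m \<ge> M" "n \<ge> M" for m n
  proof -
    have "(dist (s m) (s n))\<^sup>2 < e\<^sup>2"
      using s[of m n] M[OF that(1)] M[OF that(2)] by linarith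
    then show ?thesis
      using \<open>e > 0\<close> by (simp add: power_less_imp_less_base)
  qed
  then show "\<exists>M. \<forall>m\<ge>M. \<forall>n\<ge>M. dist (s m) (s n) < e" by blast
qed

lemma closed_subspace_nearest_point:
  fixes S :: "'a::{real_inner,complete_space} set"
  assumes S: "subspace S" "closed S"
  obtains p where "p \<in> S" "\<And>q. q \<in> S \<Longrightarrow> dist x p \<le> dist x q"
proof -
  define \<delta> where "\<delta> = infdist x S"
  have "S \<noteq> {}"
    using subspace_0[OF S(1)] by blast
  have "(INF q\<in>S. dist x q) < \<delta> + inverse (Suc n)" for n
    using \<open>S \<noteq> {}\<close> by (simp add: \<delta>_def infdist_notempty)
  then have "\<exists>q\<in>S. dist x q < \<delta> + inverse (Suc n)" for n
    using cINF_less_iff[OF \<open>S \<noteq> {}\<close> bdd_below_image_dist] by simp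
  then obtain s where s: "\<And>n. s n \<in> S" "\<And>n. dist x (s n) < \<delta> + inverse (Suc n)"
    by metis
  have \<delta>_le: "\<delta> \<le> dist x q" if "q \<in> S" for q
    using that by (simp add: \<delta>_def infdist_le)
  have "(\<lambda>n. \<delta> + inverse (Suc n)) \<longlonglongrightarrow> \<delta> + 0"
    by (intro tendsto_add tendsto_const LIMSEQ_inverse_real_of_nat)
  moreover have "\<forall>n. \<delta> \<le> dist x (s n)" "\<forall>n. dist x (s n) \<le> \<delta> + inverse (Suc n)"
    using \<delta>_le s by (auto intro: less_imp_le)
  ultimately have lim: "(\<lambda>n. dist x (s n)) \<longlonglongrightarrow> \<delta>"
    using tendsto_sandwich[OF always_eventually always_eventually tendsto_const] by simp
  define a where "a n = (dist x (s n))\<^sup>2 - \<delta>\<^sup>2" for n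
  have "a \<longlonglongrightarrow> \<delta>\<^sup>2 - \<delta>\<^sup>2"
    unfolding a_def by (intro tendsto_diff tendsto_power lim tendsto_const)
  then have a: "a \<longlonglongrightarrow> 0" by simp
  \<comment> \<open>The parallelogram law, with the midpoint of \<open>s m\<close> and \<open>s n\<close> at distance at least \<open>\<delta>\<close> from \<open>x\<close>.\<close>
  have s_close: "(dist (s m) (s n))\<^sup>2 \<le> 2 * a m + 2 * a n" for m n
  proof -
    have "midpoint (s m) (s n) \<in> S"
      unfolding midpoint_def using S(1) s(1) by (intro subspace_scale subspace_add)
    moreover have "(x - s m) + (x - s n) = 2 *\<^sub>R (x - midpoint (s m) (s n))"
      by (simp add: midpoint_def algebra_simps scaleR_2)
    ultimately have "2 * \<delta> \<le> norm ((x - s m) + (x - s n))"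
      using \<delta>_le by (simp add: dist_norm)
    then have "(2 * \<delta>)\<^sup>2 \<le> (norm ((x - s m) + (x - s n)))\<^sup>2"
      using infdist_nonneg \<delta>_def by (intro power_mono) auto
    moreover have "dist (s m) (s n) = norm ((x - s m) - (x - s n))"
      by (simp add: dist_norm norm_minus_commute)
    ultimately show ?thesis
      using parallelogram_law[of "x - s m" "x - s n"]
      unfolding a_def dist_norm power_mult_distrib by simp
  qed
  obtain p where p: "s \<longlonglongrightarrow> p"
    using Cauchy_if_dist_sq_le[OF a s_close] Cauchy_convergent_iff convergent_def by blast
  have "(\<lambda>n. dist x (s n)) \<longlonglongrightarrow> dist x p"
    by (intro tendsto_dist tendsto_const p)
  then have "dist x p = \<delta>"
    using lim LIMSEQ_unique by blast
  then show thesis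
    using that closed_sequentially[OF S(2) s(1) p] \<delta>_le by auto
qed

lemma nearest_point_orthogonal:
  fixes S :: "'a::real_inner set"
  assumes S: "subspace S" and p: "p \<in> S" and near: "\<And>q. q \<in> S \<Longrightarrow> dist x p \<le> dist x q"
    and q: "q \<in> S"
  shows "inner (x - p) q = 0"
proof (rule ccontr)
  define c where "c = inner (x - p) q"
  define b where "b = (norm q)\<^sup>2 + 1"
  assume "c \<noteq> 0"
  have "b > 0"
    by (simp add: b_def add_nonneg_pos)
  \<comment> \<open>Moving from \<open>p\<close> to \<open>p + t q\<close> with \<open>t = c / b\<close> would get closer to \<open>x\<close>.\<close>
  define t where "t = c / b"
  have "p + t *\<^sub>R q \<in> S"
    using S p q by (intro subspace_add subspace_scale)
  then have "norm (x - p) \<le> norm ((x - p) - t *\<^sub>R q)"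
    using near[of "p + t *\<^sub>R q"] by (simp add: dist_norm diff_diff_eq)
  then have "(norm (x - p))\<^sup>2 \<le> (norm ((x - p) - t *\<^sub>R q))\<^sup>2"
    by (intro power_mono) simp_all
  also have "\<dots> = (norm (x - p))\<^sup>2 - 2 * t * c + t\<^sup>2 * (b - 1)"
    unfolding c_def b_def
    by (simp only: power2_norm_eq_inner) (simp add: inner_diff inner_commute algebra_simps power2_eq_square)
  also have "2 * t * c = 2 * t\<^sup>2 * b"
    using \<open>b > 0\<close> by (simp add: t_def power2_eq_square)
  finally have le: "t\<^sup>2 * (b + 1) \<le> 0"
    by (simp add: algebra_simps)
  have "t \<noteq> 0"
    using \<open>c \<noteq> 0\<close> \<open>b > 0\<close> by (simp add: t_def)
  then have "0 < t\<^sup>2 * (b + 1)"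
    using \<open>b > 0\<close> by (intro mult_pos_pos) simp_all
  with le show False
    by simp
qed

lemma orthogonal_decomposition:
  assumes S: "csubspace S" "closed S"
  shows "\<exists>p\<in>S. x - p \<in> ortho S"
proof -
  obtain p where p: "p \<in> S" "\<And>q. q \<in> S \<Longrightarrow> dist x p \<le> dist x q"
    using closed_subspace_nearest_point[OF csubspace_imp_subspace[OF S(1)] S(2)] by blast
  then have "\<forall>q\<in>S. inner q (x - p) = 0"
    using nearest_point_orthogonal[OF csubspace_imp_subspace[OF S(1)]] by (simp add: inner_commute)
  then show ?thesis
    using p(1) mem_ortho_iff[OF S(1)] by blast
qed

lemma ortho_ortho:
  assumes S: "csubspace S" "closed S"
  shows "ortho (ortho S) = S"
proof
  show sub: "S \<subseteq> ortho (ortho S)"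
  proof
    fix x assume "x \<in> S"
    then have "inner y x = 0" if "y \<in> ortho S" for y
      using that mem_ortho_iff[OF S(1)] inner_commute by metis
    then show "x \<in> ortho (ortho S)"
      unfolding mem_ortho_iff[OF csubspace_ortho] by blast
  qed
  show "ortho (ortho S) \<subseteq> S"
  proof
    fix x assume x: "x \<in> ortho (ortho S)"
    obtain p where p: "p \<in> S" "x - p \<in> ortho S"
      using orthogonal_decomposition[OF S] by blast
    have "x - p \<in> ortho (ortho S)"
      using x sub p(1) by (intro subspace_diff csubspace_imp_subspace csubspace_ortho) auto
    then have "x - p = 0"
      using p(2) by (rule ortho_disjoint[rotated])
    then show "x \<in> S"
      using p(1) by simp
  qed
qed

lemma norm_add_eq_if_contraction:
  fixes T :: "'a::real_inner \<Rightarrow> 'b::real_inner"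
  assumes T: "linear T" "\<And>z. norm (T z) \<le> norm z"
    and x: "norm (T x) = norm x" and y: "norm (T y) = norm y"
  shows "norm (T (x + y)) = norm (x + y)"
proof -
  \<comment> \<open>By the parallelogram law, a loss of norm on \<open>x + y\<close> would force a gain on \<open>x - y\<close>.\<close>
  have "(norm (T (x + y)))\<^sup>2 + (norm (T (x - y)))\<^sup>2 = (norm (x + y))\<^sup>2 + (norm (x - y))\<^sup>2"
    using parallelogram_law[of "T x" "T y"] parallelogram_law[of x y] x y
    by (simp add: linear_add[OF T(1)] linear_diff[OF T(1)])
  moreover have "(norm (T (x + y)))\<^sup>2 \<le> (norm (x + y))\<^sup>2" "(norm (T (x - y)))\<^sup>2 \<le> (norm (x - y))\<^sup>2"
    using T(2) by (simp_all add: power_mono)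
  ultimately have "(norm (T (x + y)))\<^sup>2 = (norm (x + y))\<^sup>2"
    by linarith
  then show ?thesis
    by (simp add: power2_eq_iff_nonneg)
qed

definition vnorm2 :: "nat \<Rightarrow> (nat \<Rightarrow> 'a::real_inner) \<Rightarrow> real" where
  "vnorm2 n x = (\<Sum>i<n. (norm (x i))\<^sup>2)"

definition vinner :: "nat \<Rightarrow> (nat \<Rightarrow> 'a::real_inner) \<Rightarrow> (nat \<Rightarrow> 'a) \<Rightarrow> real" where
  "vinner n x y = (\<Sum>i<n. inner (x i) (y i))"

lemma vnorm_eq_sqrt_vnorm2: "vnorm n x = sqrt (vnorm2 n x)"
  by (simp add: vnorm_def vnorm2_def)

lemma vnorm2_nonneg: "0 \<le> vnorm2 n x"
  by (simp add: vnorm2_def sum_nonneg)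

lemma vnorm_le_iff: "vnorm n x \<le> vnorm n y \<longleftrightarrow> vnorm2 n x \<le> vnorm2 n y"
  by (simp add: vnorm_eq_sqrt_vnorm2)

lemma vnorm_less_iff: "vnorm n x < vnorm n y \<longleftrightarrow> vnorm2 n x < vnorm2 n y"
  by (simp add: vnorm_eq_sqrt_vnorm2)

lemma vnorm_eq_iff: "vnorm n x = vnorm n y \<longleftrightarrow> vnorm2 n x = vnorm2 n y"
  by (simp add: vnorm_eq_sqrt_vnorm2 vnorm2_nonneg)

lemma vnorm2_eq_0_iff: "vnorm2 n x = 0 \<longleftrightarrow> (\<forall>i<n. x i = 0)"
  by (auto simp: vnorm2_def sum_nonneg_eq_0_iff)

lemma vinner_commute: "vinner n x y = vinner n y x"
  by (simp add: vinner_def inner_commute)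

lemma vinner_self: "vinner n x x = vnorm2 n x"
  by (simp add: vinner_def vnorm2_def power2_norm_eq_inner)

lemma vnorm2_add_scaleR:
  "vnorm2 n (\<lambda>i. x i + t *\<^sub>R y i) = vnorm2 n x + 2 * t * vinner n x y + t\<^sup>2 * vnorm2 n y"
  unfolding vnorm2_def vinner_def power2_norm_eq_inner
  by (simp add: inner_add inner_commute sum.distrib sum_distrib_left power2_eq_square algebra_simps)

lemma vnorm2_diff: "vnorm2 n (\<lambda>i. x i - y i) = vnorm2 n x - 2 * vinner n x y + vnorm2 n y"
  using vnorm2_add_scaleR[of n x "- 1" y] by simp

lemma vinner_le: "2 * vinner n x y \<le> vnorm2 n x + vnorm2 n y"
  using vnorm2_nonneg[of n "\<lambda>i. x i - y i"] by (simp add: vnorm2_diff)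

lemma eq_if_vinner_eq_bound:
  assumes "vnorm2 n x \<le> c" "vnorm2 n y \<le> c" "vinner n x y = c"
  shows "\<forall>i<n. x i = y i"
proof -
  have "vnorm2 n (\<lambda>i. x i - y i) \<le> 0"
    using assms by (simp add: vnorm2_diff)
  then have "vnorm2 n (\<lambda>i. x i - y i) = 0"
    using vnorm2_nonneg by (intro antisym)
  then show ?thesis
    by (simp add: vnorm2_eq_0_iff)
qed

lemma linear_coeff_eq_0:
  fixes c M :: real
  assumes "\<And>t. 2 * t * c \<le> M"
  shows "c = 0"
proof (rule ccontr)
  assume "c \<noteq> 0"
  then have "2 * ((\<bar>M\<bar> + 1) / (2 * c)) * c = \<bar>M\<bar> + 1" by simp
  then show False
    using assms[of "(\<bar>M\<bar> + 1) / (2 * c)"] by linarith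
qed

lemma vecs_subset_UNIV: "x \<in> vecs n S \<Longrightarrow> x \<in> vecs n UNIV"
  by (simp add: vecs_def)

lemma vecs_eq_imp_eq:
  assumes "n > 0" "vecs n A = vecs n B"
  shows "A = B"
proof -
  have "a \<in> T" if "a \<in> S" "vecs n S \<subseteq> vecs n T" for a S T
  proof -
    have "(\<lambda>i. if i < n then a else 0) \<in> vecs n S"
      using that by (simp add: vecs_def)
    then have "(\<lambda>i. if i < n then a else 0) \<in> vecs n T"
      using that(2) by blast
    then show ?thesis
      using \<open>n > 0\<close> by (auto simp: vecs_def)
  qed
  then show ?thesis
    using assms(2) by blast
qed

definition single_vec :: "nat \<Rightarrow> 'a \<Rightarrow> nat \<Rightarrow> 'a::zero" where
  "single_vec i h = (\<lambda>j. if j = i then h else 0)"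

lemma single_vec_in_vecs: "i < n \<Longrightarrow> h \<in> S \<Longrightarrow> 0 \<in> S \<Longrightarrow> single_vec i h \<in> vecs n S"
  by (auto simp: vecs_def single_vec_def)

lemma single_vec_eq_0_iff [simp]: "single_vec i h = (\<lambda>_. 0) \<longleftrightarrow> h = 0"
  by (auto simp: single_vec_def fun_eq_iff)

lemma vnorm2_single_vec:
  assumes "i < n"
  shows "vnorm2 n (single_vec i h) = (norm h)\<^sup>2"
proof -
  have "vnorm2 n (single_vec i h) = (\<Sum>j<n. if j = i then (norm h)\<^sup>2 else 0)"
    unfolding vnorm2_def single_vec_def by (intro sum.cong) auto
  then show ?thesis
    using assms by simp
qed

lemma vnorm_single_vec: "i < n \<Longrightarrow> vnorm n (single_vec i h) = norm (h::'a::real_inner)"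
  by (simp add: vnorm_eq_sqrt_vnorm2 vnorm2_single_vec)

lemma vinner_single_vec: "i < n \<Longrightarrow> vinner n x (single_vec i h) = inner (x i) h"
  by (simp add: vinner_def single_vec_def if_distrib sum.delta' cong: if_cong)

section \<open>Dilations in the row ball\<close>

definition scaleZ :: "complex \<Rightarrow> (nat \<Rightarrow> nat \<Rightarrow> nat \<Rightarrow> complex) \<Rightarrow> nat \<Rightarrow> nat \<Rightarrow> nat \<Rightarrow> complex" where
  "scaleZ t Z = (\<lambda>k i j. t * Z k i j)"

lemma scaleZ_1 [simp]: "scaleZ 1 Z = Z"
  by (simp add: scaleZ_def)

lemma scaleZ_0 [simp]: "scaleZ 0 Z = (\<lambda>k i j. 0)"
  by (simp add: scaleZ_def)

lemma Zpow_scaleZ: "Zpow n (scaleZ t Z) w = (\<lambda>i j. t ^ length w * Zpow n Z w i j)"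
  by (induction w) (auto simp: matmul_def scaleZ_def sum_distrib_left algebra_simps)

lemma hterm_scaleZ: "hterm d n Bh (scaleZ t Z) x k i = t ^ k *\<^sub>C hterm d n Bh Z x k i"
  unfolding hterm_def Zpow_scaleZ cscale_sum_right
  by (intro sum.cong refl) (auto simp: words_def cscale_cscale)

definition row_norms :: "nat \<Rightarrow> nat \<Rightarrow> (nat \<Rightarrow> nat \<Rightarrow> nat \<Rightarrow> complex) \<Rightarrow> real set" where
  "row_norms d n Z = {sqrt (\<Sum>i<n. (cmod (\<Sum>k\<in>{1..d}. \<Sum>j<n. Z k i j * v k j))\<^sup>2) | v.
      (\<Sum>k\<in>{1..d}. \<Sum>j<n. (cmod (v k j))\<^sup>2) \<le> 1}"

lemma rownorm_eq_Sup: "rownorm d n Z = Sup (row_norms d n Z)"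
  by (simp add: rownorm_def row_norms_def)

lemma zero_in_row_norms: "0 \<in> row_norms d n Z"
  unfolding row_norms_def by (rule CollectI, rule exI[of _ "\<lambda>k j. 0"]) simp

lemma bdd_above_row_norms: "bdd_above (row_norms d n Z)"
proof (rule bdd_aboveI)
  fix s assume "s \<in> row_norms d n Z"
  then obtain v where s: "s = sqrt (\<Sum>i<n. (cmod (\<Sum>k\<in>{1..d}. \<Sum>j<n. Z k i j * v k j))\<^sup>2)"
    and v: "(\<Sum>k\<in>{1..d}. \<Sum>j<n. (cmod (v k j))\<^sup>2) \<le> 1"
    unfolding row_norms_def by blast
  have v_le: "cmod (v k j) \<le> 1" if "k \<in> {1..d}" "j < n" for k j
  proof -
    have "(cmod (v k j))\<^sup>2 \<le> (\<Sum>j<n. (cmod (v k j))\<^sup>2)"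
      using that by (intro member_le_sum) auto
    also have "\<dots> \<le> (\<Sum>k\<in>{1..d}. \<Sum>j<n. (cmod (v k j))\<^sup>2)"
      using that by (intro member_le_sum sum_nonneg) auto
    finally have "(cmod (v k j))\<^sup>2 \<le> 1\<^sup>2"
      using v by simp
    then show ?thesis
      by (rule power2_le_imp_le) simp
  qed
  have "cmod (\<Sum>k\<in>{1..d}. \<Sum>j<n. Z k i j * v k j) \<le> (\<Sum>k\<in>{1..d}. \<Sum>j<n. cmod (Z k i j))" for i
    by (rule order_trans[OF norm_sum sum_mono], rule order_trans[OF norm_sum sum_mono])
      (simp add: norm_mult mult_left_le v_le)
  then show "s \<le> sqrt (\<Sum>i<n. (\<Sum>k\<in>{1..d}. \<Sum>j<n. cmod (Z k i j))\<^sup>2)"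
    unfolding s by (intro real_sqrt_le_mono sum_mono power_mono) auto
qed

lemma rownorm_nonneg: "0 \<le> rownorm d n Z"
  unfolding rownorm_eq_Sup by (rule cSup_upper[OF zero_in_row_norms bdd_above_row_norms])

lemma rownorm_scaleZ_le: "rownorm d n (scaleZ t Z) \<le> cmod t * rownorm d n Z"
  unfolding rownorm_eq_Sup
proof (rule cSup_least)
  show "row_norms d n (scaleZ t Z) \<noteq> {}"
    using zero_in_row_norms by blast
next
  fix s assume "s \<in> row_norms d n (scaleZ t Z)"
  then obtain v where s: "s = sqrt (\<Sum>i<n. (cmod (\<Sum>k\<in>{1..d}. \<Sum>j<n. t * Z k i j * v k j))\<^sup>2)"
    and v: "(\<Sum>k\<in>{1..d}. \<Sum>j<n. (cmod (v k j))\<^sup>2) \<le> 1"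
    unfolding row_norms_def scaleZ_def by blast
  define s' where "s' = sqrt (\<Sum>i<n. (cmod (\<Sum>k\<in>{1..d}. \<Sum>j<n. Z k i j * v k j))\<^sup>2)"
  have "s' \<in> row_norms d n Z"
    using v unfolding row_norms_def s'_def by blast
  moreover have "s = cmod t * s'"
    by (simp add: s s'_def mult.assoc flip: sum_distrib_left)
      (simp add: norm_mult power_mult_distrib real_sqrt_mult flip: sum_distrib_left)
  ultimately show "s \<le> cmod t * Sup (row_norms d n Z)"
    by (auto intro!: mult_left_mono cSup_upper bdd_above_row_norms)
qed

lemma scaleZ_in_rowball: "cmod t * rownorm d n Z < 1 \<Longrightarrow> scaleZ t Z \<in> rowball d n"
  using rownorm_scaleZ_le[of d n t Z] by (simp add: rowball_def)

lemma zero_in_rowball: "(\<lambda>k i j. 0) \<in> rowball d n"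
  using scaleZ_in_rowball[of 0 d n] by simp

lemma small_dilation_in_rowball:
  obtains \<epsilon> :: real where "\<epsilon> > 0" "scaleZ \<epsilon> Z \<in> rowball d n"
proof -
  define r where "r = rownorm d n Z"
  define \<epsilon> where "\<epsilon> = 1 / (r + 1)"
  have "0 \<le> r"
    by (simp add: r_def rownorm_nonneg)
  then have "\<epsilon> > 0" and "\<epsilon> * r < 1"
    by (simp_all add: \<epsilon>_def field_simps add_nonneg_pos)
  moreover have "cmod (complex_of_real \<epsilon>) = \<epsilon>"
    using \<open>\<epsilon> > 0\<close> by simp
  ultimately show thesis
    using that[of \<epsilon>] scaleZ_in_rowball[of "complex_of_real \<epsilon>" d n Z] by (simp add: r_def)
qed

lemma rowball_dilation_disc:
  assumes "Z \<in> rowball d n"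
  obtains R where "R > 1" "\<And>t. cmod t < R \<Longrightarrow> scaleZ t Z \<in> rowball d n"
proof
  define r where "r = rownorm d n Z"
  have r: "0 \<le> r" "r < 1"
    using assms rownorm_nonneg by (auto simp: r_def rowball_def)
  then show "2 / (1 + r) > 1"
    by simp
  show "scaleZ t Z \<in> rowball d n" if "cmod t < 2 / (1 + r)" for t
  proof (rule scaleZ_in_rowball)
    have "cmod t * r \<le> 2 / (1 + r) * r"
      using that r by (intro mult_right_mono) auto
    also have "\<dots> < 1"
      using r by (simp add: field_simps)
    finally show "cmod t * rownorm d n Z < 1"
      by (simp add: r_def)
  qed
qed

section \<open>Evaluation at the origin and at shift matrices\<close>

lemma finite_words: "finite (words d k)"
proof -
  have "words d k = {w. set w \<subseteq> {1..d} \<and> length w = k}"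
    by (auto simp: words_def)
  then show ?thesis
    by (simp add: finite_lists_length_eq)
qed

lemma hterm_zero_matrix:
  "i < n \<Longrightarrow> hterm d n Bh (\<lambda>k i j. 0) x k i = (if k = 0 then Bh [] (x i) else 0)"
proof (cases k)
  case 0
  assume "i < n"
  have "words d 0 = {[]}"
    by (auto simp: words_def)
  then have "hterm d n Bh (\<lambda>k i j. 0) x 0 i = (\<Sum>j<n. Zpow n (\<lambda>k i j. 0) [] i j *\<^sub>C Bh [] (x j))"
    by (simp add: hterm_def)
  also have "\<dots> = (\<Sum>j<n. if j = i then Bh [] (x i) else 0)"
    by (intro sum.cong) auto
  finally show ?thesis
    using 0 \<open>i < n\<close> by simp
next
  case (Suc m)
  have "Zpow n (\<lambda>k i j. 0) w i j = 0" if "length w = Suc m" for w j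
    using that by (cases w) (simp_all add: matmul_def)
  then show ?thesis
    using Suc by (simp add: hterm_def words_def)
qed

lemma Beval_zero_matrix:
  "Beval d n Bh (\<lambda>k i j. 0) x = (\<lambda>i. if i < n then Bh [] (x i) else 0)"
proof
  fix i
  have "(\<lambda>k. if k = 0 then Bh [] (x i) else 0) sums Bh [] (x i)"
    using sums_single[of 0 "\<lambda>_. Bh [] (x i)"] by simp
  then show "Beval d n Bh (\<lambda>k i j. 0) x i = (if i < n then Bh [] (x i) else 0)"
    by (simp add: Beval_def hterm_zero_matrix sums_iff cong: if_cong)
qed

lemma Beval_zero_matrix_image:
  "Beval d n Bh (\<lambda>k i j. 0) ` vecs n S = vecs n (Bh [] ` S)"
proof
  show "Beval d n Bh (\<lambda>k i j. 0) ` vecs n S \<subseteq> vecs n (Bh [] ` S)"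
    unfolding Beval_zero_matrix by (auto simp: vecs_def)
  show "vecs n (Bh [] ` S) \<subseteq> Beval d n Bh (\<lambda>k i j. 0) ` vecs n S"
  proof
    fix y assume y: "y \<in> vecs n (Bh [] ` S)"
    then have "\<forall>i. \<exists>h. i < n \<longrightarrow> h \<in> S \<and> y i = Bh [] h"
      by (auto simp: vecs_def)
    then obtain x where x: "\<forall>i. i < n \<longrightarrow> x i \<in> S \<and> y i = Bh [] (x i)"
      by (rule choice[THEN exE])
    define x' where "x' i = (if i < n then x i else 0)" for i
    have "x' \<in> vecs n S"
      using x by (simp add: x'_def vecs_def)
    moreover have "Beval d n Bh (\<lambda>k i j. 0) x' = y"
      unfolding Beval_zero_matrix using x y by (auto simp: x'_def vecs_def)
    ultimately show "y \<in> Beval d n Bh (\<lambda>k i j. 0) ` vecs n S"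
      by blast
  qed
qed

text \<open>Evaluating \<open>B\<close> at (a multiple of) \<open>shift_matrix w\<close> on the last basis vector of
  \<open>\<complex>\<^sup>m\<^sup>+\<^sup>1\<close>, \<open>m = length w\<close>, and reading off entry \<open>0\<close> isolates the coefficient \<open>Bh w\<close>:
  \<open>w\<close> is the only word \<open>u\<close> for which \<open>Z\<^sup>u\<close> has a nonzero \<open>(0, m)\<close> entry.\<close>

definition shift_matrix :: "nat list \<Rightarrow> nat \<Rightarrow> nat \<Rightarrow> nat \<Rightarrow> complex" where
  "shift_matrix w k i j = (if j = Suc i \<and> i < length w \<and> w ! i = k then 1 else 0)"

lemma Zpow_shift_matrix:
  assumes "i \<le> length w"
  shows "Zpow (Suc (length w)) (shift_matrix w) u i j =
    (if j = i + length u \<and> i + length u \<le> length w \<and> (\<forall>p<length u. w ! (i + p) = u ! p)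
     then 1 else 0)"
  using assms
proof (induction u arbitrary: i)
  case Nil
  then show ?case by auto
next
  case (Cons k u)
  have "Zpow (Suc (length w)) (shift_matrix w) (k # u) i j =
      (\<Sum>l<Suc (length w). shift_matrix w k i l * Zpow (Suc (length w)) (shift_matrix w) u l j)"
    by (simp add: matmul_def)
  also have "\<dots> = (\<Sum>l<Suc (length w). if l = Suc i then (if i < length w \<and> w ! i = k
      then Zpow (Suc (length w)) (shift_matrix w) u l j else 0) else 0)"
    by (intro sum.cong) (auto simp: shift_matrix_def)
  also have "\<dots> = (if i < length w \<and> w ! i = k
      then Zpow (Suc (length w)) (shift_matrix w) u (Suc i) j else 0)"
    by (simp add: sum.delta')
  also have "\<dots> = (if j = i + length (k # u) \<and> i + length (k # u) \<le> length w \<and>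
      (\<forall>p<length (k # u). w ! (i + p) = (k # u) ! p) then 1 else 0)"
  proof -
    have "(\<forall>p<length (k # u). w ! (i + p) = (k # u) ! p) \<longleftrightarrow>
        w ! i = k \<and> (\<forall>p<length u. w ! (Suc i + p) = u ! p)"
      by (auto simp: less_Suc_eq_0_disj)
    then show ?thesis
      using Cons.IH[of "Suc i"] by (cases "i < length w") auto
  qed
  finally show ?case .
qed

lemma Zpow_shift_matrix_corner:
  "length u = k \<Longrightarrow> Zpow (Suc (length w)) (shift_matrix w) u 0 (length w) =
    (if u = w then 1 else 0)"
  by (auto simp: Zpow_shift_matrix intro: nth_equalityI)

section \<open>A maximum principle for power series\<close>

lemma power_series_eq_if_Re_max:
  fixes c :: "nat \<Rightarrow> complex"
  assumes summable: "\<And>t. cmod t < R \<Longrightarrow> summable (\<lambda>k. c k * t ^ k)"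
    and t0: "cmod t0 < R"
    and max: "\<And>t. cmod t < R \<Longrightarrow> Re (\<Sum>k. c k * t ^ k) \<le> Re (\<Sum>k. c k * t0 ^ k)"
    and t: "cmod t < R"
  shows "(\<Sum>k. c k * t ^ k) = (\<Sum>k. c k * t0 ^ k)"
proof -
  define f where "f = eval_fps (Abs_fps c)"
  have f: "f z = (\<Sum>k. c k * z ^ k)" for z
    by (simp add: f_def eval_fps_def)
  have "ereal R \<le> conv_radius c"
    by (rule conv_radius_geI_ex') (use summable in auto)
  then have "ball 0 R \<subseteq> eball 0 (fps_conv_radius (Abs_fps c))"
    by (intro ball_eball_mono) (simp add: fps_conv_radius_def)
  then have holo: "f holomorphic_on ball 0 R"
    unfolding f_def by (rule holomorphic_on_eval_fps)
  \<comment> \<open>Otherwise \<open>f\<close> would be an open map, and \<open>f t0 + e/2\<close> would be a value of larger real part.\<close>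
  have "f constant_on ball 0 R"
  proof (rule ccontr)
    assume "\<not> f constant_on ball 0 R"
    then have "open (f ` ball 0 R)"
      by (intro open_mapping_thm[OF holo]) auto
    moreover have "f t0 \<in> f ` ball 0 R"
      using t0 by simp
    ultimately obtain e where e: "e > 0" "ball (f t0) e \<subseteq> f ` ball 0 R"
      unfolding open_contains_ball by blast
    then have "f t0 + of_real (e / 2) \<in> f ` ball 0 R"
      by (intro subsetD[OF e(2)]) (simp add: dist_norm)
    then obtain s where "cmod s < R" "f s = f t0 + of_real (e / 2)"
      by auto
    then show False
      using max[of s] e(1) by (simp add: f)
  qed
  then obtain C where "\<And>z. z \<in> ball 0 R \<Longrightarrow> f z = C"
    unfolding constant_on_def by blast
  then have "f t = f t0"
    using t t0 by simp
  then show ?thesis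
    by (simp add: f)
qed

section \<open>Schur-class functions\<close>

definition schur_decomposition ::
    "nat \<Rightarrow> (nat list \<Rightarrow> 'h::chilbert \<Rightarrow> 'j::chilbert) \<Rightarrow> 'h set \<Rightarrow> 'j set \<Rightarrow> bool" where
  "schur_decomposition d Bh H0 J0 \<longleftrightarrow>
    csubspace H0 \<and> closed H0 \<and> csubspace J0 \<and> closed J0 \<and>
    (\<forall>n>0. \<forall>Z\<in>rowball d n.
       Beval d n Bh Z ` vecs n H0 \<subseteq> vecs n J0 \<and>
       Beval d n Bh Z ` vecs n (ortho H0) \<subseteq> vecs n (ortho J0)) \<and>
    schur d H0 J0 Bh \<and> purely_contractive d H0 Bh \<and>
    (\<forall>n>0. \<forall>Z\<in>rowball d n. \<forall>x\<in>vecs n (ortho H0).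
       Beval d n Bh Z x = Beval d n Bh (\<lambda>k i j. 0) x) \<and>
    (\<forall>n>0. (\<forall>x\<in>vecs n (ortho H0). vnorm n (Beval d n Bh (\<lambda>k i j. 0) x) = vnorm n x) \<and>
           Beval d n Bh (\<lambda>k i j. 0) ` vecs n (ortho H0) = vecs n (ortho J0))"

locale schur_class =
  fixes d :: nat and Bh :: "nat list \<Rightarrow> 'h::chilbert \<Rightarrow> 'j::chilbert"
  assumes schur: "schur d UNIV UNIV Bh"
begin

lemma coeff_add: "set w \<subseteq> {1..d} \<Longrightarrow> Bh w (x + y) = Bh w x + Bh w y"
  using schur by (simp add: schur_def)

lemma coeff_cscale: "set w \<subseteq> {1..d} \<Longrightarrow> Bh w (a *\<^sub>C x) = a *\<^sub>C Bh w x"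
  using schur by (simp add: schur_def)

lemma coeff_scaleR: "set w \<subseteq> {1..d} \<Longrightarrow> Bh w (r *\<^sub>R x) = r *\<^sub>R Bh w x"
  using coeff_cscale[of w "complex_of_real r"] by (simp add: cscale_of_real)

lemma coeff_zero: "set w \<subseteq> {1..d} \<Longrightarrow> Bh w 0 = 0"
  using coeff_cscale[of w 0 0] by simp

lemma coeff_bounded: "set w \<subseteq> {1..d} \<Longrightarrow> \<exists>C. \<forall>x. norm (Bh w x) \<le> C * norm x"
  using schur by (simp add: schur_def)

lemma summable_hterm:
  "n > 0 \<Longrightarrow> Z \<in> rowball d n \<Longrightarrow> x \<in> vecs n UNIV \<Longrightarrow> i < n \<Longrightarrow>
    summable (\<lambda>k. hterm d n Bh Z x k i)"
  using schur by (simp add: schur_def)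

lemma vnorm2_Beval_le:
  "n > 0 \<Longrightarrow> Z \<in> rowball d n \<Longrightarrow> x \<in> vecs n UNIV \<Longrightarrow>
    vnorm2 n (Beval d n Bh Z x) \<le> vnorm2 n x"
  using schur by (simp add: schur_def flip: vnorm_le_iff)

lemma Beval_add_scaleR:
  assumes n: "n > 0" and Z: "Z \<in> rowball d n" and x: "x \<in> vecs n UNIV" and y: "y \<in> vecs n UNIV"
  shows "Beval d n Bh Z (\<lambda>j. x j + t *\<^sub>R y j) = (\<lambda>i. Beval d n Bh Z x i + t *\<^sub>R Beval d n Bh Z y i)"
proof
  fix i
  have hterm_eq: "hterm d n Bh Z (\<lambda>j. x j + t *\<^sub>R y j) k i =
      hterm d n Bh Z x k i + t *\<^sub>R hterm d n Bh Z y k i" for k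
    unfolding hterm_def scaleR_sum_right sum.distrib[symmetric]
    by (intro sum.cong refl) (auto simp: words_def coeff_add coeff_scaleR cscale_add_right cscale_scaleR)
  have sums: "(\<lambda>k. hterm d n Bh Z z k i) sums Beval d n Bh Z z i" if "i < n" "z \<in> vecs n UNIV" for z
    using summable_hterm[OF n Z that(2) that(1)] that(1) by (simp add: Beval_def summable_sums)
  show "Beval d n Bh Z (\<lambda>j. x j + t *\<^sub>R y j) i = Beval d n Bh Z x i + t *\<^sub>R Beval d n Bh Z y i"
  proof (cases "i < n")
    case True
    then have "(\<lambda>k. hterm d n Bh Z x k i + t *\<^sub>R hterm d n Bh Z y k i) sums
        (Beval d n Bh Z x i + t *\<^sub>R Beval d n Bh Z y i)"
      using sums x y by (intro sums_add sums_scaleR_right)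
    then show ?thesis
      using True by (simp add: Beval_def sums_iff hterm_eq)
  qed (simp add: Beval_def)
qed

lemma Beval_orthogonal_if_isometric:
  assumes n: "n > 0" and Z: "Z \<in> rowball d n" and x: "x \<in> vecs n UNIV" and y: "y \<in> vecs n UNIV"
    and xy: "vinner n x y = 0" and iso: "vnorm2 n (Beval d n Bh Z y) = vnorm2 n y"
  shows "vinner n (Beval d n Bh Z x) (Beval d n Bh Z y) = 0"
proof (rule linear_coeff_eq_0)
  fix t
  have "(\<lambda>j. x j + t *\<^sub>R y j) \<in> vecs n UNIV"
    using x y by (simp add: vecs_def)
  from vnorm2_Beval_le[OF n Z this]
  have "vnorm2 n (Beval d n Bh Z x) + 2 * t * vinner n (Beval d n Bh Z x) (Beval d n Bh Z y)
      + t\<^sup>2 * vnorm2 n (Beval d n Bh Z y) \<le> vnorm2 n x + 2 * t * vinner n x y + t\<^sup>2 * vnorm2 n y"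
    unfolding Beval_add_scaleR[OF n Z x y] vnorm2_add_scaleR .
  then show "2 * t * vinner n (Beval d n Bh Z x) (Beval d n Bh Z y) \<le> vnorm2 n x"
    using vnorm2_nonneg[of n "Beval d n Bh Z x"] unfolding xy iso by linarith
qed

lemma power_series_vinner_Beval:
  assumes n: "n > 0" and Z: "scaleZ s Z \<in> rowball d n" and x: "x \<in> vecs n UNIV"
  shows "(\<lambda>k. (\<Sum>i<n. cinner (u i) (hterm d n Bh Z x k i)) * s ^ k) sums
      (\<Sum>i<n. cinner (u i) (Beval d n Bh (scaleZ s Z) x i))"
proof -
  have "(\<lambda>k. (\<Sum>i<n. cinner (u i) (hterm d n Bh Z x k i)) * s ^ k) =
      (\<lambda>k. \<Sum>i<n. cinner (u i) (hterm d n Bh (scaleZ s Z) x k i))"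
    by (simp add: hterm_scaleZ cinner_cscale_right sum_distrib_left mult.commute)
  moreover have "(\<lambda>k. hterm d n Bh (scaleZ s Z) x k i) sums Beval d n Bh (scaleZ s Z) x i" if "i < n" for i
    using summable_hterm[OF n Z x that] that by (simp add: Beval_def summable_sums)
  ultimately show ?thesis
    by (simp only:) (intro sums_sum bounded_linear.sums[OF bounded_linear_cinner_right], simp)
qed

lemma Beval_dilation_eq_if_isometric:
  assumes n: "n > 0" and x: "x \<in> vecs n UNIV"
    and disc: "\<And>t. cmod t < R \<Longrightarrow> scaleZ t Z \<in> rowball d n"
    and t0: "cmod t0 < R" and iso: "vnorm2 n (Beval d n Bh (scaleZ t0 Z) x) = vnorm2 n x"
    and t: "cmod t < R"
  shows "Beval d n Bh (scaleZ t Z) x = Beval d n Bh (scaleZ t0 Z) x"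
proof -
  define u where "u = Beval d n Bh (scaleZ t0 Z) x"
  define v where "v s = Beval d n Bh (scaleZ s Z) x" for s
  define c where "c k = (\<Sum>i<n. cinner (u i) (hterm d n Bh Z x k i))" for k
  have sums: "(\<lambda>k. c k * s ^ k) sums (\<Sum>i<n. cinner (u i) (v s i))" if "cmod s < R" for s
    unfolding c_def v_def by (rule power_series_vinner_Beval[OF n disc[OF that] x])
  then have Re_series: "Re (\<Sum>k. c k * s ^ k) = vinner n u (v s)" if "cmod s < R" for s
    using that by (simp add: sums_iff Re_sum vinner_def)
  have v_le: "vnorm2 n (v s) \<le> vnorm2 n x" if "cmod s < R" for s
    unfolding v_def using that by (intro vnorm2_Beval_le n disc x)
  have u_norm: "vnorm2 n u = vnorm2 n x"
    using iso by (simp add: u_def)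
  have Re_t0: "Re (\<Sum>k. c k * t0 ^ k) = vnorm2 n x"
    using Re_series[OF t0] u_norm by (simp add: vinner_self u_def v_def)
  \<comment> \<open>\<open>Re \<langle>u, v s\<rangle>\<close> is at most \<open>\<parallel>x\<parallel>\<^sup>2\<close>, with equality at \<open>s = t0\<close>.\<close>
  have "(\<Sum>k. c k * t ^ k) = (\<Sum>k. c k * t0 ^ k)"
  proof (rule power_series_eq_if_Re_max[where R = R])
    show "summable (\<lambda>k. c k * s ^ k)" if "cmod s < R" for s
      using sums[OF that] by (rule sums_summable)
    show "Re (\<Sum>k. c k * s ^ k) \<le> Re (\<Sum>k. c k * t0 ^ k)" if "cmod s < R" for s
      using Re_series[OF that] vinner_le[of n u "v s"] v_le[OF that] u_norm Re_t0 by linarith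
  qed (rule t0, rule t)
  then have "vinner n (v t) u = vnorm2 n x"
    using Re_series[OF t] Re_t0 by (simp add: vinner_commute)
  then have v_t: "\<forall>i<n. v t i = u i"
    using v_le[OF t] u_norm by (intro eq_if_vinner_eq_bound) simp_all
  show ?thesis
  proof
    fix i
    show "Beval d n Bh (scaleZ t Z) x i = Beval d n Bh (scaleZ t0 Z) x i"
      using v_t by (cases "i < n") (simp_all add: u_def v_def Beval_def)
  qed
qed

lemma Beval_zero_matrix_single_vec:
  "i < n \<Longrightarrow> Beval d n Bh (\<lambda>k i j. 0) (single_vec i h) = single_vec i (Bh [] h)"
  by (auto simp: Beval_zero_matrix single_vec_def coeff_zero)

lemma norm_coeff_Nil_le: "norm (Bh [] h) \<le> norm h"
proof -
  have "vnorm2 1 (Beval d 1 Bh (\<lambda>k i j. 0) (single_vec 0 h)) \<le> vnorm2 1 (single_vec 0 h)"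
    by (intro vnorm2_Beval_le zero_in_rowball single_vec_in_vecs) simp_all
  then have "(norm (Bh [] h))\<^sup>2 \<le> (norm h)\<^sup>2"
    by (simp add: Beval_zero_matrix_single_vec vnorm2_single_vec)
  then show ?thesis
    by (simp add: power2_le_iff_abs_le)
qed

lemma bounded_linear_coeff_Nil: "bounded_linear (Bh [])"
  by (rule bounded_linear_intro[where K = 1]) (simp_all add: coeff_add coeff_scaleR norm_coeff_Nil_le)

definition Hunit :: "'h set" where
  "Hunit = {h. norm (Bh [] h) = norm h}"

definition Junit :: "'j set" where
  "Junit = Bh [] ` Hunit"

definition H0 :: "'h set" where
  "H0 = ortho Hunit"

definition J0 :: "'j set" where
  "J0 = ortho Junit"

lemma csubspace_Hunit: "csubspace Hunit"
  unfolding csubspace_def Hunit_def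
  using norm_add_eq_if_contraction[OF bounded_linear.linear[OF bounded_linear_coeff_Nil] norm_coeff_Nil_le]
  by (simp add: coeff_zero coeff_cscale norm_cscale)

lemma closed_Hunit: "closed Hunit"
  unfolding Hunit_def
  by (intro closed_Collect_eq continuous_on_norm continuous_on_id
      linear_continuous_on[OF bounded_linear_coeff_Nil])

lemma csubspace_Junit: "csubspace Junit"
  unfolding csubspace_def Junit_def
proof (intro conjI ballI allI)
  have H: "0 \<in> Hunit" "\<And>a b. a \<in> Hunit \<Longrightarrow> b \<in> Hunit \<Longrightarrow> a + b \<in> Hunit"
    "\<And>c a. a \<in> Hunit \<Longrightarrow> c *\<^sub>C a \<in> Hunit"
    using csubspace_Hunit by (simp_all add: csubspace_def)
  show "0 \<in> Bh [] ` Hunit"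
    by (rule image_eqI[of _ _ 0]) (simp_all add: coeff_zero H(1))
  show "y + z \<in> Bh [] ` Hunit" if y: "y \<in> Bh [] ` Hunit" and z: "z \<in> Bh [] ` Hunit" for y z
  proof -
    obtain a b where "a \<in> Hunit" "b \<in> Hunit" "y = Bh [] a" "z = Bh [] b"
      using y z by blast
    then show ?thesis
      by (intro image_eqI[of _ _ "a + b"]) (simp_all add: coeff_add H(2))
  qed
  show "c *\<^sub>C y \<in> Bh [] ` Hunit" if y: "y \<in> Bh [] ` Hunit" for c y
  proof -
    obtain a where "a \<in> Hunit" "y = Bh [] a"
      using y by blast
    then show ?thesis
      by (intro image_eqI[of _ _ "c *\<^sub>C a"]) (simp_all add: coeff_cscale H(3))
  qed
qed

lemma closed_Junit: "closed Junit"
proof -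
  have "\<forall>x\<in>Hunit. 1 * norm x \<le> norm (Bh [] x)"
    by (simp add: Hunit_def)
  then have "complete (Bh [] ` Hunit)"
    using complete_isometric_image[OF zero_less_one csubspace_imp_subspace[OF csubspace_Hunit]
        bounded_linear_coeff_Nil] closed_Hunit
    by (simp add: complete_eq_closed)
  then show ?thesis
    by (simp add: Junit_def complete_eq_closed)
qed

lemma ortho_H0: "ortho H0 = Hunit"
  unfolding H0_def by (rule ortho_ortho[OF csubspace_Hunit closed_Hunit])

lemma ortho_J0: "ortho J0 = Junit"
  unfolding J0_def by (rule ortho_ortho[OF csubspace_Junit closed_Junit])

lemma vnorm2_Beval_zero_matrix_eq_iff:
  "vnorm2 n (Beval d n Bh (\<lambda>k i j. 0) x) = vnorm2 n x \<longleftrightarrow> (\<forall>i<n. x i \<in> Hunit)"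
proof -
  define f where "f i = (norm (x i))\<^sup>2 - (norm (Bh [] (x i)))\<^sup>2" for i
  have diff: "vnorm2 n x - vnorm2 n (Beval d n Bh (\<lambda>k i j. 0) x) = (\<Sum>i<n. f i)"
    by (simp add: vnorm2_def Beval_zero_matrix sum_subtractf f_def)
  have f_nonneg: "0 \<le> f i" for i
    by (simp add: f_def norm_coeff_Nil_le power_mono)
  have f_eq_0: "f i = 0 \<longleftrightarrow> x i \<in> Hunit" for i
    by (auto simp: f_def Hunit_def power2_eq_iff_nonneg)
  have "vnorm2 n (Beval d n Bh (\<lambda>k i j. 0) x) = vnorm2 n x \<longleftrightarrow> (\<Sum>i<n. f i) = 0"
    by (metis diff right_minus_eq)
  also have "\<dots> \<longleftrightarrow> (\<forall>i<n. f i = 0)"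
    using f_nonneg by (simp add: sum_nonneg_eq_0_iff Ball_def)
  finally show ?thesis
    by (simp add: f_eq_0)
qed

lemma Beval_eq_on_Hunit:
  assumes n: "n > 0" and Z: "Z \<in> rowball d n" and x: "x \<in> vecs n Hunit"
  shows "Beval d n Bh Z x = Beval d n Bh (\<lambda>k i j. 0) x"
proof -
  obtain R where "R > 1" and disc: "\<And>t. cmod t < R \<Longrightarrow> scaleZ t Z \<in> rowball d n"
    using rowball_dilation_disc[OF Z] by blast
  have "vnorm2 n (Beval d n Bh (scaleZ 0 Z) x) = vnorm2 n x"
    using x by (simp add: vnorm2_Beval_zero_matrix_eq_iff vecs_def)
  moreover have "cmod 0 < R" "cmod 1 < R"
    using \<open>R > 1\<close> by simp_all
  ultimately have "Beval d n Bh (scaleZ 1 Z) x = Beval d n Bh (scaleZ 0 Z) x"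
    by (intro Beval_dilation_eq_if_isometric[OF n vecs_subset_UNIV[OF x] disc])
  then show ?thesis
    by simp
qed

lemma Beval_Hunit_subset:
  assumes n: "n > 0" and Z: "Z \<in> rowball d n" and x: "x \<in> vecs n Hunit"
  shows "Beval d n Bh Z x \<in> vecs n Junit"
proof -
  have "Beval d n Bh (\<lambda>k i j. 0) x \<in> Beval d n Bh (\<lambda>k i j. 0) ` vecs n Hunit"
    using x by (rule imageI)
  then show ?thesis
    by (simp add: Beval_eq_on_Hunit[OF n Z x] Beval_zero_matrix_image Junit_def)
qed

lemma Beval_H0_subset:
  assumes n: "n > 0" and Z: "Z \<in> rowball d n" and x: "x \<in> vecs n H0"
  shows "Beval d n Bh Z x \<in> vecs n J0"
proof -
  have "inner y (Beval d n Bh Z x i) = 0" if i: "i < n" and y: "y \<in> Junit" for i y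
  proof -
    obtain h where h: "h \<in> Hunit" "y = Bh [] h"
      using y by (auto simp: Junit_def)
    have e: "single_vec i h \<in> vecs n Hunit"
      by (rule single_vec_in_vecs[OF i h(1) csubspace_0[OF csubspace_Hunit]])
    have Be: "Beval d n Bh Z (single_vec i h) = single_vec i y"
      using Beval_eq_on_Hunit[OF n Z e] by (simp add: Beval_zero_matrix_single_vec i h(2))
    have "vnorm2 n (Beval d n Bh Z (single_vec i h)) = vnorm2 n (single_vec i h)"
      using e by (simp add: Beval_eq_on_Hunit[OF n Z e] vnorm2_Beval_zero_matrix_eq_iff vecs_def)
    moreover have "vinner n x (single_vec i h) = 0"
      using x i h(1) by (simp add: vinner_single_vec vecs_def H0_def mem_ortho_iff[OF csubspace_Hunit] inner_commute)
    ultimately have "vinner n (Beval d n Bh Z x) (single_vec i y) = 0"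
      using Beval_orthogonal_if_isometric[OF n Z vecs_subset_UNIV[OF x] vecs_subset_UNIV[OF e]] Be
      by simp
    then show ?thesis
      using i by (simp add: vinner_single_vec inner_commute)
  qed
  then have "Beval d n Bh Z x i \<in> J0" if "i < n" for i
    using that by (simp add: J0_def mem_ortho_iff[OF csubspace_Junit])
  moreover have "Beval d n Bh Z x i = 0" if "n \<le> i" for i
    using that by (simp add: Beval_def)
  ultimately show ?thesis
    by (simp add: vecs_def)
qed

lemma Beval_H0_strict:
  assumes n: "n > 0" and Z: "Z \<in> rowball d n" and x: "x \<in> vecs n H0" and "x \<noteq> (\<lambda>_. 0)"
  shows "vnorm n (Beval d n Bh Z x) < vnorm n x"
proof (rule ccontr)
  assume "\<not> ?thesis"
  then have iso: "vnorm2 n (Beval d n Bh (scaleZ 1 Z) x) = vnorm2 n x"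
    using vnorm2_Beval_le[OF n Z vecs_subset_UNIV[OF x]] by (simp add: vnorm_less_iff)
  obtain R where "R > 1" and disc: "\<And>t. cmod t < R \<Longrightarrow> scaleZ t Z \<in> rowball d n"
    using rowball_dilation_disc[OF Z] by blast
  \<comment> \<open>Isometric at \<open>Z\<close>, hence at the origin, so the entries of \<open>x\<close> lie in \<open>Hunit \<inter> H0 = 0\<close>.\<close>
  have "cmod 0 < R" "cmod 1 < R"
    using \<open>R > 1\<close> by simp_all
  with iso have "Beval d n Bh (scaleZ 0 Z) x = Beval d n Bh (scaleZ 1 Z) x"
    by (intro Beval_dilation_eq_if_isometric[OF n vecs_subset_UNIV[OF x] disc])
  then have "vnorm2 n (Beval d n Bh (\<lambda>k i j. 0) x) = vnorm2 n x"
    using iso by simp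
  then have "\<forall>i<n. x i \<in> Hunit"
    by (simp only: vnorm2_Beval_zero_matrix_eq_iff)
  then have "x i = 0" for i
    using x ortho_disjoint[of "x i" Hunit] by (cases "i < n") (auto simp: vecs_def H0_def)
  then show False
    using \<open>x \<noteq> (\<lambda>_. 0)\<close> by auto
qed

lemma hterm_shift_matrix_single_vec:
  assumes w: "set w \<subseteq> {1..d}"
  shows "hterm d (Suc (length w)) Bh (shift_matrix w) (single_vec (length w) h) k 0 =
    (if k = length w then Bh w h else 0)"
proof -
  have "hterm d (Suc (length w)) Bh (shift_matrix w) (single_vec (length w) h) k 0 =
      (\<Sum>u\<in>words d k. Zpow (Suc (length w)) (shift_matrix w) u 0 (length w) *\<^sub>C Bh u h)"
    unfolding hterm_def
  proof (intro sum.cong refl)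
    fix u assume "u \<in> words d k"
    then have "Bh u 0 = 0"
      by (intro coeff_zero) (simp add: words_def)
    then have "(\<Sum>j<Suc (length w). Zpow (Suc (length w)) (shift_matrix w) u 0 j *\<^sub>C
        Bh u (single_vec (length w) h j)) = (\<Sum>j<Suc (length w). if j = length w
          then Zpow (Suc (length w)) (shift_matrix w) u 0 (length w) *\<^sub>C Bh u h else 0)"
      by (intro sum.cong) (auto simp: single_vec_def)
    then show "(\<Sum>j<Suc (length w). Zpow (Suc (length w)) (shift_matrix w) u 0 j *\<^sub>C
        Bh u (single_vec (length w) h j)) = Zpow (Suc (length w)) (shift_matrix w) u 0 (length w) *\<^sub>C Bh u h"
      by simp
  qed
  also have "\<dots> = (\<Sum>u\<in>words d k. if u = w then Bh w h else 0)"
    by (intro sum.cong refl) (simp add: words_def Zpow_shift_matrix_corner)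
  also have "\<dots> = (if w \<in> words d k then Bh w h else 0)"
    by (simp add: sum.delta[OF finite_words])
  also have "\<dots> = (if k = length w then Bh w h else 0)"
    using w by (auto simp: words_def)
  finally show ?thesis .
qed

lemma coeff_maps_H0:
  assumes w: "set w \<subseteq> {1..d}" and h: "h \<in> H0"
  shows "Bh w h \<in> J0"
proof -
  define m where "m = length w"
  obtain \<epsilon> :: real where "\<epsilon> > 0" and Z: "scaleZ \<epsilon> (shift_matrix w) \<in> rowball d (Suc m)"
    using small_dilation_in_rowball by blast
  have x: "single_vec m h \<in> vecs (Suc m) H0"
    using single_vec_in_vecs[of m "Suc m" h H0] h csubspace_0[OF csubspace_ortho, of Hunit]
    by (simp add: H0_def)
  have "(\<lambda>k. hterm d (Suc m) Bh (scaleZ \<epsilon> (shift_matrix w)) (single_vec m h) k 0) sums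
      (complex_of_real \<epsilon> ^ m *\<^sub>C Bh w h)"
    using sums_single[of m "\<lambda>_. complex_of_real \<epsilon> ^ m *\<^sub>C Bh w h"]
    by (simp add: hterm_scaleZ hterm_shift_matrix_single_vec[OF w] m_def if_distrib cong: if_cong)
  then have "Beval d (Suc m) Bh (scaleZ \<epsilon> (shift_matrix w)) (single_vec m h) 0 =
      complex_of_real \<epsilon> ^ m *\<^sub>C Bh w h"
    by (simp add: Beval_def sums_iff)
  moreover have "Beval d (Suc m) Bh (scaleZ \<epsilon> (shift_matrix w)) (single_vec m h) 0 \<in> J0"
    using Beval_H0_subset[OF _ Z x] by (simp add: vecs_def)
  ultimately have "inverse (complex_of_real \<epsilon> ^ m) *\<^sub>C (complex_of_real \<epsilon> ^ m *\<^sub>C Bh w h) \<in> J0"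
    unfolding J0_def by (simp add: csubspace_cscale[OF csubspace_ortho])
  then show ?thesis
    using \<open>\<epsilon> > 0\<close> by (simp add: cscale_cscale)
qed

lemma schur_H0: "schur d H0 J0 Bh"
  unfolding schur_def
proof (intro conjI allI impI ballI)
  fix w :: "nat list" assume w: "set w \<subseteq> {1..d}"
  show "Bh w ` H0 \<subseteq> J0"
    using coeff_maps_H0[OF w] by blast
  show "Bh w (x + y) = Bh w x + Bh w y" for x y
    by (rule coeff_add[OF w])
  show "Bh w (a *\<^sub>C x) = a *\<^sub>C Bh w x" for a x
    by (rule coeff_cscale[OF w])
  show "\<exists>C. \<forall>x\<in>H0. norm (Bh w x) \<le> C * norm x"
    using coeff_bounded[OF w] by blast
next
  fix n Z x assume n: "n > 0" and Z: "Z \<in> rowball d n" and x: "x \<in> vecs n H0"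
  show "summable (\<lambda>k. hterm d n Bh Z x k i)" if "i < n" for i
    by (rule summable_hterm[OF n Z vecs_subset_UNIV[OF x] that])
  show "vnorm n (Beval d n Bh Z x) \<le> vnorm n x"
    unfolding vnorm_le_iff by (rule vnorm2_Beval_le[OF n Z vecs_subset_UNIV[OF x]])
qed

lemma schur_decomposition_H0_J0: "schur_decomposition d Bh H0 J0"
  unfolding schur_decomposition_def ortho_H0 ortho_J0
proof (intro conjI allI impI ballI)
  show "csubspace H0" "closed H0" "csubspace J0" "closed J0"
    by (simp_all add: H0_def J0_def csubspace_ortho closed_ortho)
  show "schur d H0 J0 Bh"
    by (rule schur_H0)
  show "purely_contractive d H0 Bh"
    unfolding purely_contractive_def using Beval_H0_strict by blast
  fix n :: nat assume n: "n > 0"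
  show "Beval d n Bh (\<lambda>k i j. 0) ` vecs n Hunit = vecs n Junit"
    by (simp add: Beval_zero_matrix_image Junit_def)
  show "vnorm n (Beval d n Bh (\<lambda>k i j. 0) x) = vnorm n x" if "x \<in> vecs n Hunit" for x
    using that by (simp add: vnorm_eq_iff vnorm2_Beval_zero_matrix_eq_iff vecs_def)
  fix Z assume Z: "Z \<in> rowball d n"
  show "Beval d n Bh Z ` vecs n H0 \<subseteq> vecs n J0"
    using Beval_H0_subset[OF n Z] by blast
  show "Beval d n Bh Z ` vecs n Hunit \<subseteq> vecs n Junit"
    using Beval_Hunit_subset[OF n Z] by blast
  show "Beval d n Bh Z x = Beval d n Bh (\<lambda>k i j. 0) x" if "x \<in> vecs n Hunit" for x
    by (rule Beval_eq_on_Hunit[OF n Z that])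
qed

lemma schur_decomposition_unitary_part:
  assumes "schur_decomposition d Bh H J"
  shows "ortho H = Hunit" and "ortho J = Junit"
proof -
  have H: "csubspace H" "closed H"
    and pc: "purely_contractive d H Bh"
    and unit: "\<forall>n>0. (\<forall>x\<in>vecs n (ortho H). vnorm n (Beval d n Bh (\<lambda>k i j. 0) x) = vnorm n x) \<and>
      Beval d n Bh (\<lambda>k i j. 0) ` vecs n (ortho H) = vecs n (ortho J)"
    using assms unfolding schur_decomposition_def by blast+
  have iso: "\<forall>x\<in>vecs 1 (ortho H). vnorm 1 (Beval d 1 Bh (\<lambda>k i j. 0) x) = vnorm 1 x"
    and image: "Beval d 1 Bh (\<lambda>k i j. 0) ` vecs 1 (ortho H) = vecs 1 (ortho J)"
    using unit[rule_format, OF zero_less_one] by blast+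
  \<comment> \<open>Test the defining properties on tuples of length one at \<open>Z = 0\<close>.\<close>
  have iso1: "norm (Bh [] h) = norm h" if "h \<in> ortho H" for h
  proof -
    have "single_vec 0 h \<in> vecs 1 (ortho H)"
      using single_vec_in_vecs[OF _ that csubspace_0[OF csubspace_ortho]] by simp
    with iso have "vnorm 1 (Beval d 1 Bh (\<lambda>k i j. 0) (single_vec 0 h)) = vnorm 1 (single_vec 0 h)"
      by blast
    then show ?thesis
      by (simp add: Beval_zero_matrix_single_vec vnorm_single_vec)
  qed
  have strict1: "norm (Bh [] h) < norm h" if "h \<in> H" "h \<noteq> 0" for h
  proof -
    have "single_vec 0 h \<in> vecs 1 H"
      using single_vec_in_vecs[OF _ that(1) csubspace_0[OF H(1)]] by simp
    then show ?thesis
      using pc[unfolded purely_contractive_def, rule_format, of 1 "\<lambda>k i j. 0" "single_vec 0 h"]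
        zero_in_rowball \<open>h \<noteq> 0\<close>
      by (simp add: Beval_zero_matrix_single_vec vnorm_single_vec)
  qed
  show "ortho H = Hunit"
  proof
    show "ortho H \<subseteq> Hunit"
      using iso1 by (auto simp: Hunit_def)
    show "Hunit \<subseteq> ortho H"
    proof
      fix k assume k: "k \<in> Hunit"
      obtain p where p: "p \<in> H" "k - p \<in> ortho H"
        using orthogonal_decomposition[OF H] by blast
      have "p \<in> Hunit"
        using subspace_diff[OF csubspace_imp_subspace[OF csubspace_Hunit] k, of "k - p"] p(2) iso1
        by (simp add: Hunit_def)
      then have "p = 0"
        using strict1[OF p(1)] by (auto simp: Hunit_def)
      then show "k \<in> ortho H"
        using p(2) by simp
    qed
  qed
  then have "vecs 1 (ortho J) = vecs 1 Junit"
    using image by (simp add: Beval_zero_matrix_image Junit_def)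
  then show "ortho J = Junit"
    by (rule vecs_eq_imp_eq[rotated]) simp
qed

lemma schur_decomposition_unique:
  assumes "schur_decomposition d Bh H J"
  shows "H = H0 \<and> J = J0"
proof -
  have "csubspace H" "closed H" "csubspace J" "closed J"
    using assms unfolding schur_decomposition_def by blast+
  then show ?thesis
    using ortho_ortho schur_decomposition_unitary_part[OF assms] by (metis H0_def J0_def)
qed

end

theorem mainTheorem5:
  fixes d :: nat and Bh :: "nat list \<Rightarrow> 'h::chilbert \<Rightarrow> 'j::chilbert"
  assumes "schur d (UNIV :: 'h set) (UNIV :: 'j set) Bh"
  shows "\<exists>!HJ :: 'h set \<times> 'j set.
    (let H0 = fst HJ; J0 = snd HJ; H' = ortho H0; J' = ortho J0 in
      csubspace H0 \<and> closed H0 \<and> csubspace J0 \<and> closed J0 \<and>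
      (\<forall>n>0. \<forall>Z\<in>rowball d n.
         Beval d n Bh Z ` vecs n H0 \<subseteq> vecs n J0 \<and>
         Beval d n Bh Z ` vecs n H' \<subseteq> vecs n J') \<and>
      schur d H0 J0 Bh \<and> purely_contractive d H0 Bh \<and>
      (\<forall>n>0. \<forall>Z\<in>rowball d n. \<forall>x\<in>vecs n H'.
         Beval d n Bh Z x = Beval d n Bh (\<lambda>k i j. 0) x) \<and>
      (\<forall>n>0. (\<forall>x\<in>vecs n H'. vnorm n (Beval d n Bh (\<lambda>k i j. 0) x) = vnorm n x) \<and>
             Beval d n Bh (\<lambda>k i j. 0) ` vecs n H' = vecs n J'))"
proof -
  interpret schur_class d Bh
    by unfold_locales (rule assms)
  have "\<exists>!HJ. schur_decomposition d Bh (fst HJ) (snd HJ)"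
  proof (rule ex1I[of _ "(H0, J0)"])
    show "schur_decomposition d Bh (fst (H0, J0)) (snd (H0, J0))"
      using schur_decomposition_H0_J0 by simp
    show "HJ = (H0, J0)" if "schur_decomposition d Bh (fst HJ) (snd HJ)" for HJ
      using schur_decomposition_unique[OF that] by (simp add: prod_eq_iff)
  qed
  then show ?thesis
    unfolding schur_decomposition_def Let_def .
qed

end
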